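(* Let $b\ge 1$, $k\ge 1$ and $1\le s\le k$ be integers. Then for every integer $t$, $$\sigma^{(b)}_{k}(t;s)=\frac{1}{k}\sum_{\xi\in\Delta_{k}}(\xi)_{s-1}\,\xi^{-t},$$ where $\Delta_k=\{e^{2\pi i h/k}: 1\le h\le k,\ \gcd(h,k)=1\}$ is the set of primitive $k$-th roots of unity and $(\xi)_{s-1}=(1-\xi)(1-\xi^2)\cdots(1-\xi^{s-1})$.
   Context: For a positive integer $m$, $(q)_m=(1-q)\cdots(1-q^m)$, $(q)_0=1$. For integers $b\ge 0$, $k\ge1$ and $1\le s\le k$, let $R^{(b)}_{k,s}(q)=\sum_{t=0}^{k-1}\sigma^{(b)}_k(t;s)q^t$ be the remainder of $\frac{1}{k^b}(q)_{k-1}^{\,b}(q)_{s-1}$ upon division by $1-q^k$; the values $\sigma^{(b)}_k(t;s)$ are extended to all integers $t$ by $k$-periodicity. *)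

theory Defs
  imports "HOL-Complex_Analysis.Complex_Analysis" "HOL-Computational_Algebra.Polynomial"
begin

definition qpoch :: "nat \<Rightarrow> 'a::comm_ring_1 poly" where
  "qpoch m = (\<Prod>i=1..m. 1 - monom 1 i)"

definition Rpoly :: "nat \<Rightarrow> nat \<Rightarrow> nat \<Rightarrow> rat poly" where
  "Rpoly b k s = (smult (1 / of_nat k ^ b) (qpoch (k - 1) ^ b * qpoch (s - 1))) mod (1 - monom 1 k)"

definition sigma :: "nat \<Rightarrow> nat \<Rightarrow> nat \<Rightarrow> int \<Rightarrow> rat" where
  "sigma b k s t = coeff (Rpoly b k s) (nat (t mod int k))"

definition prim_roots :: "nat \<Rightarrow> complex set" where
  "prim_roots k = {cis (2 * pi * real h / real k) | h. 1 \<le> h \<and> h \<le> k \<and> coprime h k}"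

definition qpoch_val :: "complex \<Rightarrow> nat \<Rightarrow> complex" where
  "qpoch_val x m = (\<Prod>j=1..m. 1 - x ^ j)"

end

theory Submission
  imports Defs "HOL-Computational_Algebra.Fundamental_Theorem_Algebra"
begin

(*
  Let R be the remainder. Since 1 - q^k vanishes at every k-th root of unity z,
  R(z) = k^(-b) (z)_(k-1)^b (z)_(s-1). If z is primitive, the factors 1 - z^i (0 < i < k)
  of (z)_(k-1) are the 1 - w over all roots w other than 1, whose product is the value
  of (q^k - 1)/(q - 1) at q = 1, namely k; otherwise some z^i = 1 and (z)_(k-1) = 0.
  As deg R < k, the coefficients of R are recovered from these values by discrete
  Fourier inversion over the k-th roots of unity.
*)

lemma cis_2pi_div_power_int_eq_1_iff:
  fixes k :: nat and n :: int
  assumes "k > 0"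
  shows "cis (2 * pi / k) powi n = 1 \<longleftrightarrow> int k dvd n"
proof -
  have "cis (2 * pi / k) powi n = 1 \<longleftrightarrow> cos (of_int n * (2 * pi / k)) = 1"
    by (auto simp: cis_power_int complex_eq_iff cos_one_sin_zero)
  also have "\<dots> \<longleftrightarrow> (\<exists>m::int. of_int n * (2 * pi / k) = of_int m * 2 * pi)"
    by (rule cos_one_2pi_int)
  also have "\<dots> \<longleftrightarrow> (\<exists>m::int. n = m * int k)"
  proof -
    have "of_int n * (2 * pi / k) = of_int m * 2 * pi \<longleftrightarrow> n = m * int k" for m :: int
    proof -
      have "of_int n * (2 * pi / k) = of_int m * 2 * pi \<longleftrightarrow> real_of_int n = of_int (m * int k)"
        using assms by (simp add: field_simps)
      then show ?thesis by (simp only: of_int_eq_iff)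
    qed
    then show ?thesis by simp
  qed
  finally show ?thesis by (auto simp: dvd_def mult.commute)
qed

lemma cis_2pi_div_power_eq_1_iff:
  fixes k n :: nat
  assumes "k > 0"
  shows "cis (2 * pi / k) ^ n = 1 \<longleftrightarrow> k dvd n"
  using cis_2pi_div_power_int_eq_1_iff[OF assms, of "int n"] by simp

lemma sum_roots_unity_power_int:
  assumes "k > 0"
  shows "(\<Sum>z | z ^ k = 1. z powi n) = (if int k dvd n then of_nat k else (0::complex))"
proof -
  define \<omega> where "\<omega> = cis (2 * pi / k)"
  have "(\<Sum>z | z ^ k = 1. z powi n) = (\<Sum>j<k. cis (2 * pi * real j / real k) powi n)"
    using assms by (intro sum.reindex_bij_betw [symmetric] Complex.bij_betw_roots_unity)
  also have "\<dots> = (\<Sum>j<k. (\<omega> powi n) ^ j)"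
  proof (intro sum.cong refl)
    fix j
    have "cis (2 * pi * real j / real k) = \<omega> ^ j"
      unfolding \<omega>_def Complex.DeMoivre by (simp add: field_simps)
    then show "cis (2 * pi * real j / real k) powi n = (\<omega> powi n) ^ j"
      by (simp add: power_int_power power_int_power' mult.commute)
  qed
  also have "\<dots> = (if int k dvd n then of_nat k else 0)"
  proof -
    have "(\<omega> powi n) ^ k = (\<omega> ^ k) powi n"
      by (simp add: power_int_power power_int_power' mult.commute)
    also have "\<omega> ^ k = 1"
      using cis_2pi_div_power_eq_1_iff[OF assms] by (simp add: \<omega>_def)
    finally show ?thesis
      using cis_2pi_div_power_int_eq_1_iff[OF assms, of n] by (simp add: sum_gp_strict \<omega>_def)
  qed
  finally show ?thesis .
qed

lemma coeff_eq_sum_roots_unity: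
  fixes p :: "complex poly"
  assumes "degree p < k"
  shows "coeff p (nat (t mod int k)) = 1 / of_nat k * (\<Sum>z | z ^ k = 1. poly p z * z powi (- t))"
proof -
  have k: "k > 0" using assms by simp
  define t0 where "t0 = nat (t mod int k)"
  have t0: "t0 < k" "int t0 = t mod int k" using k by (simp_all add: t0_def nat_less_iff)
  have poly_p: "poly p z = (\<Sum>i<k. coeff p i * z ^ i)" for z
    unfolding poly_altdef using assms
    by (intro sum.mono_neutral_left) (auto simp: coeff_eq_0)
  have "(\<Sum>z | z ^ k = 1. poly p z * z powi (- t))
      = (\<Sum>i<k. coeff p i * (\<Sum>z | z ^ k = 1. z powi (int i - t)))"
  proof -
    have "poly p z * z powi (- t) = (\<Sum>i<k. coeff p i * z powi (int i - t))" if "z ^ k = 1" for z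
    proof -
      have "z \<noteq> 0" using that k by (metis zero_neq_one zero_power)
      then have "z ^ i * z powi (- t) = z powi (int i - t)" for i
        by (simp add: power_int_diff power_int_minus divide_inverse)
      then show ?thesis by (simp add: poly_p sum_distrib_right mult.assoc)
    qed
    then have "(\<Sum>z | z ^ k = 1. poly p z * z powi (- t))
        = (\<Sum>z | z ^ k = 1. \<Sum>i<k. coeff p i * z powi (int i - t))"
      by (intro sum.cong) auto
    then show ?thesis by (simp add: sum.swap[of _ "{..<k}"] sum_distrib_left)
  qed
  also have "\<dots> = (\<Sum>i<k. if i = t0 then coeff p i * of_nat k else 0)"
  proof (intro sum.cong refl)
    fix i assume "i \<in> {..<k}"
    then have "int k dvd int i - t \<longleftrightarrow> i = t0"
      using t0 by (simp add: mod_eq_dvd_iff [symmetric]) (metis of_nat_eq_iff)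
    then show "coeff p i * (\<Sum>z | z ^ k = 1. z powi (int i - t))
        = (if i = t0 then coeff p i * of_nat k else 0)"
      using sum_roots_unity_power_int[OF k] by simp
  qed
  also have "\<dots> = of_nat k * coeff p t0" using t0 by simp
  finally show ?thesis using k by (simp add: t0_def)
qed

lemma prod_one_minus_nontrivial_roots_unity:
  assumes "k > 0"
  shows "(\<Prod>z\<in>{z::complex. z ^ k = 1} - {1}. 1 - z) = of_nat k"
proof -
  define p :: "complex poly" where "p = monom 1 k - 1"
  let ?U = "{z::complex. z ^ k = 1}"
  have "degree (monom (1::complex) k + - 1) = k"
    using assms by (subst degree_add_eq_left) (simp_all add: degree_monom_eq)
  then have lead: "lead_coeff p = 1"
    using assms by (simp add: p_def)
  have roots: "{z. poly p z = 0} = ?U"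
    by (auto simp: p_def poly_monom)
  have "rsquarefree p"
    unfolding rsquarefree_roots
  proof (intro allI notI)
    fix a assume "poly p a = 0 \<and> poly (pderiv p) a = 0"
    then have "a ^ k = 1" and "of_nat k * a ^ (k - 1) = 0"
      by (auto simp: p_def poly_monom pderiv_monom pderiv_diff)
    moreover from this have "a \<noteq> 0" using assms by (metis zero_neq_one zero_power)
    ultimately show False using assms by simp
  qed
  then have "p = (\<Prod>z\<in>?U. [:-z, 1:])"
    using complex_poly_decompose_rsquarefree[of p] lead roots by simp
  also have "\<dots> = [:-1, 1:] * (\<Prod>z\<in>?U - {1}. [:-z, 1:])"
    using assms by (subst prod.remove[of _ 1]) (auto intro: finite_roots_unity)
  finally have factor: "p = [:-1, 1:] * (\<Prod>z\<in>?U - {1}. [:-z, 1:])" .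
  have "p = ([:0, 1:] - 1) * (\<Sum>i<k. [:0, 1:] ^ i)"
    unfolding p_def monom_altdef by (simp add: power_diff_1_eq)
  also have "[:0, 1:] - 1 = ([:-1, 1:] :: complex poly)"
    by (simp add: one_pCons)
  finally have "(\<Prod>z\<in>?U - {1}. [:-z, 1:]) = (\<Sum>i<k. [:0::complex, 1:] ^ i)"
    using factor by (metis mult_left_cancel pCons_eq_0_iff zero_neq_one)
  then have "poly (\<Prod>z\<in>?U - {1}. [:-z, 1:]) 1 = poly (\<Sum>i<k. [:0::complex, 1:] ^ i) 1"
    by simp
  then show ?thesis by (simp add: poly_prod poly_sum)
qed

lemma prim_roots_iff:
  assumes "k > 0"
  shows "z \<in> prim_roots k \<longleftrightarrow> z ^ k = 1 \<and> (\<forall>d. 0 < d \<longrightarrow> d < k \<longrightarrow> z ^ d \<noteq> 1)"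
proof -
  define \<omega> where "\<omega> = cis (2 * pi / k)"
  have cis_eq: "cis (2 * pi * real h / real k) = \<omega> ^ h" for h
    unfolding \<omega>_def Complex.DeMoivre by (simp add: field_simps)
  have pow_eq_1: "(\<omega> ^ h) ^ d = 1 \<longleftrightarrow> k dvd h * d" for h d
    unfolding \<omega>_def power_mult[symmetric] using cis_2pi_div_power_eq_1_iff[OF assms] by simp
  have prim_roots_eq: "prim_roots k = {\<omega> ^ h | h. 1 \<le> h \<and> h \<le> k \<and> coprime h k}"
    by (simp add: prim_roots_def cis_eq)
  show ?thesis
  proof
    assume "z \<in> prim_roots k"
    then obtain h where z: "z = \<omega> ^ h" and "coprime k h"
      by (auto simp: prim_roots_eq coprime_commute)
    then have "z ^ d = 1 \<longleftrightarrow> k dvd d" for d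
      by (simp add: pow_eq_1 coprime_dvd_mult_right_iff)
    then show "z ^ k = 1 \<and> (\<forall>d. 0 < d \<longrightarrow> d < k \<longrightarrow> z ^ d \<noteq> 1)"
      by (auto dest: dvd_imp_le)
  next
    assume z: "z ^ k = 1 \<and> (\<forall>d. 0 < d \<longrightarrow> d < k \<longrightarrow> z ^ d \<noteq> 1)"
    then obtain j where "j < k" "z = \<omega> ^ j"
      using Complex.bij_betw_roots_unity[OF assms] by (auto simp: bij_betw_def cis_eq)
    define h where "h = (if j = 0 then k else j)"
    have h: "1 \<le> h" "h \<le> k" using \<open>j < k\<close> assms by (auto simp: h_def)
    have "\<omega> ^ k = 1" using pow_eq_1[of 1 k] by simp
    then have zh: "z = \<omega> ^ h" using \<open>z = \<omega> ^ j\<close> by (simp add: h_def)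
    obtain h' d where hk: "h = gcd h k * h'" "k = gcd h k * d"
      by (meson dvdE gcd_dvd1 gcd_dvd2)
    then have "d > 0" using assms by (metis mult_0_right neq0_conv)
    moreover have "z ^ d = 1"
      unfolding zh pow_eq_1 by (metis hk dvd_triv_right mult.assoc mult.commute)
    ultimately have "gcd h k * d \<le> 1 * d" using z hk(2) by (metis mult_1 not_less)
    then have "gcd h k = 1" using \<open>d > 0\<close> assms by (simp add: le_antisym Suc_le_eq)
    then show "z \<in> prim_roots k"
      using h zh by (auto simp: prim_roots_eq coprime_iff_gcd_eq_1)
  qed
qed

lemma qpoch_val_root_unity:
  assumes "k > 0" "z ^ k = 1"
  shows "qpoch_val z (k - 1) = (if z \<in> prim_roots k then of_nat k else 0)"
proof (cases "z \<in> prim_roots k")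
  case True
  let ?U = "{z::complex. z ^ k = 1}"
  have order: "z ^ d \<noteq> 1" if "0 < d" "d < k" for d
    using True that prim_roots_iff[OF assms(1)] by blast
  have "z \<noteq> 0" using assms by (metis zero_neq_one zero_power)
  have inj: "inj_on (\<lambda>i. z ^ i) {1..k - 1}"
  proof (rule linorder_inj_onI')
    fix a b assume "a \<in> {1..k - 1}" "b \<in> {1..k - 1}" "a < b"
    show "z ^ a \<noteq> z ^ b"
    proof
      assume "z ^ a = z ^ b"
      moreover have "z ^ a * z ^ (b - a) = z ^ b"
        using \<open>a < b\<close> by (simp flip: power_add)
      ultimately have "z ^ (b - a) = 1" using \<open>z \<noteq> 0\<close> by simp
      moreover have "b - a < k" using \<open>b \<in> {1..k - 1}\<close> assms(1) by auto
      ultimately show False using order[of "b - a"] \<open>a < b\<close> by simp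
    qed
  qed
  have sub: "(\<lambda>i. z ^ i) ` {1..k - 1} \<subseteq> ?U - {1}"
  proof -
    have "(z ^ i) ^ k = (z ^ k) ^ i" for i by (simp flip: power_mult add: mult.commute)
    then show ?thesis using order assms by auto
  qed
  have "card ((\<lambda>i. z ^ i) ` {1..k - 1}) = k - 1"
    using card_image[OF inj] by simp
  also have "\<dots> = card (?U - {1})"
    using assms by (simp add: card_roots_unity_eq finite_roots_unity)
  finally have "(\<lambda>i. z ^ i) ` {1..k - 1} = ?U - {1}"
    using sub assms by (intro card_subset_eq) (auto intro: finite_roots_unity)
  then have "bij_betw (\<lambda>i. z ^ i) {1..k - 1} (?U - {1})"
    using inj by (simp add: bij_betw_def)
  then have "qpoch_val z (k - 1) = (\<Prod>z\<in>?U - {1}. 1 - z)"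
    unfolding qpoch_val_def by (rule prod.reindex_bij_betw)
  with True show ?thesis
    using prod_one_minus_nontrivial_roots_unity[OF assms(1)] by simp
next
  case False
  then obtain d where "0 < d" "d < k" "z ^ d = 1"
    using prim_roots_iff[OF assms(1)] assms(2) by blast
  then show ?thesis
    using False by (auto simp: qpoch_val_def prod_zero_iff intro!: bexI[of _ d])
qed

lemma map_poly_of_rat_add:
  "map_poly of_rat (p + q) = map_poly of_rat p + (map_poly of_rat q :: 'a::field_char_0 poly)"
  by (rule poly_eqI) (simp add: coeff_map_poly of_rat_add)

lemma map_poly_of_rat_diff:
  "map_poly of_rat (p - q) = map_poly of_rat p - (map_poly of_rat q :: 'a::field_char_0 poly)"
  by (rule poly_eqI) (simp add: coeff_map_poly of_rat_diff)

lemma map_poly_of_rat_mult: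
  "map_poly of_rat (p * q) = map_poly of_rat p * (map_poly of_rat q :: 'a::field_char_0 poly)"
  by (rule poly_eqI) (simp add: coeff_map_poly coeff_mult of_rat_sum of_rat_mult)

lemma map_poly_of_rat_power: "map_poly of_rat (p ^ n) = (map_poly of_rat p :: 'a::field_char_0 poly) ^ n"
  by (induction n) (simp_all add: map_poly_of_rat_mult)

lemma map_poly_of_rat_prod:
  "map_poly of_rat (\<Prod>i\<in>A. f i) = (\<Prod>i\<in>A. map_poly of_rat (f i) :: 'a::field_char_0 poly)"
  by (induction A rule: infinite_finite_induct) (simp_all add: map_poly_of_rat_mult)

lemma poly_map_poly_of_rat_mod:
  fixes z :: "'a::field_char_0"
  assumes "poly (map_poly of_rat d) z = 0"
  shows "poly (map_poly of_rat (p mod d)) z = poly (map_poly of_rat p) z"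
proof -
  have "p = p div d * d + p mod d" by simp
  then have "map_poly of_rat p
      = map_poly of_rat (p div d) * map_poly of_rat d + (map_poly of_rat (p mod d) :: 'a poly)"
    by (metis map_poly_of_rat_add map_poly_of_rat_mult)
  then show ?thesis using assms by simp
qed

lemma poly_map_poly_of_rat_qpoch: "poly (map_poly of_rat (qpoch m)) z = qpoch_val z m"
  by (simp add: qpoch_def qpoch_val_def map_poly_of_rat_prod map_poly_of_rat_diff map_poly_monom
      poly_prod poly_monom)

lemma degree_Rpoly:
  assumes "k > 0"
  shows "degree (Rpoly b k s) < k"
proof -
  let ?D = "1 - monom (1::rat) k"
  have "degree ?D = k"
    using degree_add_eq_right[of 1 "- monom (1::rat) k"] assms by (simp add: degree_monom_eq)
  moreover from this have "?D \<noteq> 0" using assms by auto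
  ultimately show ?thesis
    using assms degree_mod_less[of ?D] unfolding Rpoly_def by (metis degree_0)
qed

lemma poly_Rpoly_root_unity:
  assumes "b \<ge> 1" "k > 0" "z ^ k = 1"
  shows "poly (map_poly of_rat (Rpoly b k s)) z = (if z \<in> prim_roots k then qpoch_val z (s - 1) else 0)"
proof -
  have "poly (map_poly of_rat (1 - monom 1 k)) z = 0"
    using assms by (simp add: map_poly_of_rat_diff map_poly_monom poly_monom)
  then have "poly (map_poly of_rat (Rpoly b k s)) z
      = of_rat (1 / of_nat k ^ b) * qpoch_val z (k - 1) ^ b * qpoch_val z (s - 1)"
    unfolding Rpoly_def
    by (simp add: poly_map_poly_of_rat_mod map_poly_of_rat_mult map_poly_of_rat_power
        map_poly_smult[of of_rat] of_rat_mult poly_map_poly_of_rat_qpoch)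
  also have "\<dots> = (if z \<in> prim_roots k then qpoch_val z (s - 1) else 0)"
    using assms qpoch_val_root_unity[OF assms(2,3)] by (simp add: of_rat_divide of_rat_power)
  finally show ?thesis .
qed

theorem lemma2p4:
  fixes b k s :: nat and t :: int
  assumes "b \<ge> 1" and "k \<ge> 1" and "1 \<le> s" and "s \<le> k"
  shows "of_rat (sigma b k s t) =
    (1 / of_nat k) * (\<Sum>\<xi>\<in>prim_roots k. qpoch_val \<xi> (s - 1) * \<xi> powi (- t))"
proof -
  let ?R = "map_poly of_rat (Rpoly b k s) :: complex poly"
  have k: "k > 0" using assms by simp
  have "of_rat (sigma b k s t) = coeff ?R (nat (t mod int k))"
    by (simp add: sigma_def coeff_map_poly)
  also have "\<dots> = 1 / of_nat k * (\<Sum>z | z ^ k = 1. poly ?R z * z powi (- t))"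
    using degree_Rpoly[OF k] by (intro coeff_eq_sum_roots_unity) (simp add: degree_map_poly)
  also have "(\<Sum>z | z ^ k = 1. poly ?R z * z powi (- t))
      = (\<Sum>z | z ^ k = 1. if z \<in> prim_roots k then qpoch_val z (s - 1) * z powi (- t) else 0)"
    using assms k by (intro sum.cong) (simp_all add: poly_Rpoly_root_unity)
  also have "\<dots> = (\<Sum>\<xi>\<in>{z. z ^ k = 1} \<inter> prim_roots k. qpoch_val \<xi> (s - 1) * \<xi> powi (- t))"
    using k by (intro sum.inter_restrict[symmetric] finite_roots_unity) simp
  also have "{z. z ^ k = 1} \<inter> prim_roots k = prim_roots k"
    using prim_roots_iff[OF k] by blast
  finally show ?thesis .
qed

end
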